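(* Let $\omega$ be a weight function and let $\mathcal M_\omega=(\mathbf W^{(\lambda)})_{\lambda>0}$, $W^{(\lambda)}_\alpha:=e^{\frac1\lambda\varphi^*_\omega(\lambda|\alpha|)}$. Then $\Lambda_{\{\omega\}}=\Lambda_{\{\mathcal M_\omega\}}$ and $\Lambda_{(\omega)}=\Lambda_{(\mathcal M_\omega)}$, and these equalities are also topological.
   Context: A weight function is a continuous increasing function $\omega:[0,+\infty)\to[0,+\infty)$ such that: ($\alpha$) there is $L\ge1$ with $\omega(2t)\le L(\omega(t)+1)$ for all $t\ge0$; ($\beta$) $\omega(t)=O(t^2)$ as $t\to+\infty$; ($\gamma$) $\log t=o(\omega(t))$ as $t\to+\infty$; ($\delta$) $\varphi_\omega(t):=\omega(e^t)$ is convex on $[0,+\infty)$. For $t\in\mathbb R^d$, $\omega(t):=\omega(|t|)$. Young conjugate: $\varphi_\omega^*(s):=\sup_{t\ge0}\{ts-\varphi_\omega(t)\}$. $\alpha^{1/2}:=(\alpha_1^{1/2},\dots,\alpha_d^{1/2})$. $\Lambda_{\{\omega\}}$ is the set of $\mathbf c=(c_\alpha)\in\mathbb C^{\mathbb N_0^d}$ such that $\sup_\alpha|c_\alpha|e^{\frac1j\omega(\alpha^{1/2}/j)}<\infty$ for some $j\in\mathbb N$ (inductive limit topology); $\Lambda_{(\omega)}$ is the set of $\mathbf c$ with $\sup_\alpha|c_\alpha|e^{j\omega(j\alpha^{1/2})}<\infty$ for all $j\in\mathbb N$ (projective limit topology). For a sequence $\mathbf M=(M_\alpha)$, $\omega_{\mathbf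 M}(t)=\sup_{\alpha\in\mathbb N^d_{0,t}}\log\frac{|t^\alpha|}{M_\alpha}$, where $\mathbb N^d_{0,t}=\{\alpha:\alpha_j=0\text{ whenever }t_j=0\}$, $0^0=1$; $\|\mathbf c\|_{\mathbf M,h}:=\sup_\alpha|c_\alpha|e^{\omega_{\mathbf M}(\alpha^{1/2}/h)}$. $\Lambda_{\{\mathcal M_\omega\}}$ is the set of $\mathbf c$ with $\|\mathbf c\|_{\mathbf W^{(\lambda)},h}<\infty$ for some $\lambda,h>0$ (inductive limit over $j$ of the norms $\|\cdot\|_{\mathbf W^{(j)},j}$); $\Lambda_{(\mathcal M_\omega)}$ the set with this finite for all $\lambda,h>0$ (projective limit of the norms $\|\cdot\|_{\mathbf W^{(1/j)},1/j}$). *)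

theory Defs
  imports "HOL-Analysis.Analysis" "HOL-Library.Landau_Symbols"
begin

definition weight_function :: "(real \<Rightarrow> real) \<Rightarrow> bool" where
  "weight_function \<omega> \<longleftrightarrow>
     continuous_on {0..} \<omega> \<and> mono_on {0..} \<omega> \<and> (\<forall>t\<ge>0. \<omega> t \<ge> 0) \<and>
     (\<exists>L\<ge>1. \<forall>t\<ge>0. \<omega> (2 * t) \<le> L * (\<omega> t + 1)) \<and>
     \<omega> \<in> O[at_top](\<lambda>t. t ^ 2) \<and>
     (\<lambda>t. ln t) \<in> o[at_top](\<omega>) \<and>
     convex_on {0..} (\<lambda>t. \<omega> (exp t))"

definition young_conj :: "(real \<Rightarrow> real) \<Rightarrow> real \<Rightarrow> real" where
  "young_conj \<omega> s = Sup {t * s - \<omega> (exp t) | t. t \<ge> 0}"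

definition vnorm :: "('d::finite \<Rightarrow> real) \<Rightarrow> real" where
  "vnorm t = sqrt (\<Sum>i\<in>UNIV. (t i)\<^sup>2)"

definition mlen :: "('d::finite \<Rightarrow> nat) \<Rightarrow> real" where
  "mlen \<alpha> = (\<Sum>i\<in>UNIV. real (\<alpha> i))"

definition msqrt_div :: "('d::finite \<Rightarrow> nat) \<Rightarrow> real \<Rightarrow> ('d \<Rightarrow> real)" where
  "msqrt_div \<alpha> h = (\<lambda>i. sqrt (real (\<alpha> i)) / h)"

fun eexp :: "ereal \<Rightarrow> ereal" where
  "eexp (ereal x) = ereal (exp x)"
| "eexp PInfty = PInfty"
| "eexp MInfty = 0"

type_synonym 'd mseq = "('d \<Rightarrow> nat) \<Rightarrow> complex"

text \<open>\<open>\<omega>_M(t) = sup_{\<alpha> \<in> N^d_{0,t}} log (|t^\<alpha>| / M_\<alpha>)\<close> (with \<open>0^0 = 1\<close>).\<close>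
definition omegaM :: "(('d::finite \<Rightarrow> nat) \<Rightarrow> real) \<Rightarrow> ('d \<Rightarrow> real) \<Rightarrow> ereal" where
  "omegaM M t = (SUP \<beta>\<in>{\<beta>. \<forall>j. t j = 0 \<longrightarrow> \<beta> j = 0}.
                   ereal (ln ((\<Prod>j\<in>UNIV. \<bar>t j\<bar> ^ \<beta> j) / M \<beta>)))"

definition normM :: "(('d::finite \<Rightarrow> nat) \<Rightarrow> real) \<Rightarrow> real \<Rightarrow> 'd mseq \<Rightarrow> ereal" where
  "normM M h c = (SUP \<alpha>. ereal (cmod (c \<alpha>)) * eexp (omegaM M (msqrt_div \<alpha> h)))"

definition Wseq :: "(real \<Rightarrow> real) \<Rightarrow> real \<Rightarrow> ('d::finite \<Rightarrow> nat) \<Rightarrow> real" where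
  "Wseq \<omega> lam \<alpha> = exp ((1 / lam) * young_conj \<omega> (lam * mlen \<alpha>))"

definition norm_R :: "(real \<Rightarrow> real) \<Rightarrow> nat \<Rightarrow> 'd::finite mseq \<Rightarrow> ereal" where
  "norm_R \<omega> j c = (SUP \<alpha>. ereal (cmod (c \<alpha>) *
        exp ((1 / real j) * \<omega> (vnorm (msqrt_div \<alpha> (real j))))))"

definition norm_B :: "(real \<Rightarrow> real) \<Rightarrow> nat \<Rightarrow> 'd::finite mseq \<Rightarrow> ereal" where
  "norm_B \<omega> j c = (SUP \<alpha>. ereal (cmod (c \<alpha>) *
        exp (real j * \<omega> (vnorm (msqrt_div \<alpha> (1 / real j))))))"

definition Lambda_R :: "(real \<Rightarrow> real) \<Rightarrow> 'd::finite mseq set" where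
  "Lambda_R \<omega> = {c. \<exists>j::nat. j \<ge> 1 \<and> norm_R \<omega> j c < \<infinity>}"

definition Lambda_B :: "(real \<Rightarrow> real) \<Rightarrow> 'd::finite mseq set" where
  "Lambda_B \<omega> = {c. \<forall>j::nat. j \<ge> 1 \<longrightarrow> norm_B \<omega> j c < \<infinity>}"

definition Lambda_MR :: "(real \<Rightarrow> real) \<Rightarrow> 'd::finite mseq set" where
  "Lambda_MR \<omega> = {c. \<exists>lam>0. \<exists>h>0. normM (Wseq \<omega> lam) h c < \<infinity>}"

definition Lambda_MB :: "(real \<Rightarrow> real) \<Rightarrow> 'd::finite mseq set" where
  "Lambda_MB \<omega> = {c. \<forall>lam>0. \<forall>h>0. normM (Wseq \<omega> lam) h c < \<infinity>}"

definition norm_MR :: "(real \<Rightarrow> real) \<Rightarrow> nat \<Rightarrow> 'd::finite mseq \<Rightarrow> ereal" where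
  "norm_MR \<omega> j = normM (Wseq \<omega> (real j)) (real j)"

definition norm_MB :: "(real \<Rightarrow> real) \<Rightarrow> nat \<Rightarrow> 'd::finite mseq \<Rightarrow> ereal" where
  "norm_MB \<omega> j = normM (Wseq \<omega> (1 / real j)) (1 / real j)"

definition abs_convex :: "'d mseq set \<Rightarrow> bool" where
  "abs_convex U \<longleftrightarrow> (\<forall>u\<in>U. \<forall>v\<in>U. \<forall>a b::complex. cmod a + cmod b \<le> 1 \<longrightarrow>
       (\<lambda>\<alpha>. a * u \<alpha> + b * v \<alpha>) \<in> U)"

text \<open>Underlying set of the (LB) inductive limit of the normed spaces
  \<open>{c. N j c < \<infinity>}\<close>, \<open>j \<ge> 1\<close>, and its locally convex inductive limit topology:
  a base of zero neighbourhoods consists of absolutely convex sets absorbing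
  a ball of every step \<open>N j\<close>.\<close>
definition LB_set :: "(nat \<Rightarrow> 'd mseq \<Rightarrow> ereal) \<Rightarrow> 'd mseq set" where
  "LB_set N = {c. \<exists>j\<ge>1. N j c < \<infinity>}"

definition LB_open :: "(nat \<Rightarrow> 'd mseq \<Rightarrow> ereal) \<Rightarrow> 'd mseq set \<Rightarrow> bool" where
  "LB_open N A \<longleftrightarrow> A \<subseteq> LB_set N \<and>
     (\<forall>x\<in>A. \<exists>U. abs_convex U \<and> U \<subseteq> LB_set N \<and>
        (\<forall>j\<ge>1. \<exists>\<epsilon>>0. {c. N j c < ereal \<epsilon>} \<subseteq> U) \<and>
        (\<lambda>u. (\<lambda>\<alpha>. x \<alpha> + u \<alpha>)) ` U \<subseteq> A)"

text \<open>Projective limit: topology generated by the seminorms \<open>N j\<close>, \<open>j \<ge> 1\<close>.\<close>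
definition PL_set :: "(nat \<Rightarrow> 'd mseq \<Rightarrow> ereal) \<Rightarrow> 'd mseq set" where
  "PL_set N = {c. \<forall>j\<ge>1. N j c < \<infinity>}"

definition PL_open :: "(nat \<Rightarrow> 'd mseq \<Rightarrow> ereal) \<Rightarrow> 'd mseq set \<Rightarrow> bool" where
  "PL_open N A \<longleftrightarrow> A \<subseteq> PL_set N \<and>
     (\<forall>x\<in>A. \<exists>n\<ge>1. \<exists>\<epsilon>>0.
        {y\<in>PL_set N. \<forall>j\<in>{1..n}. N j (\<lambda>\<alpha>. y \<alpha> - x \<alpha>) < ereal \<epsilon>} \<subseteq> A)"

end

theory Submission
  imports Defs
begin

text \<open>
  Write \<phi>(x) = \<omega>(e^x), so that W^(\<lambda>)_\<beta> = exp(\<phi>*(\<lambda>|\<beta>|)/\<lambda>). Young's inequality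
  \<lambda>|\<beta>| x \<le> \<phi>(x) + \<phi>*(\<lambda>|\<beta>|) at x = log |t| gives |t^\<beta>| / W^(\<lambda>)_\<beta> \<le> exp(\<omega>(|t|)/\<lambda>),
  hence \<omega>_W(t) \<le> \<omega>(max(|t|, 1))/\<lambda>. Conversely, for a coordinate with |t_i| > 1 let s be
  the slope of a supporting line of the convex increasing function \<phi> at log |t_i|, and
  take \<beta> = k e_i with k = \<lfloor>s/\<lambda>\<rfloor>: Young's inequality is then almost an equality, and
  \<omega>_W(t) \<ge> \<omega>(|t_i|)/\<lambda> - log(1 + |t_i|).

  For t = \<alpha>^(1/2)/h and a largest entry \<alpha>_i we have |\<alpha>^(1/2)| \<le> d \<alpha>_i^(1/2), and
  log t = o(\<omega>(t)) absorbs the logarithm into half of \<omega>(|t_i|)/\<lambda>. So the weight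
  exp(\<omega>_W(\<alpha>^(1/2)/h)) lies between constant multiples of exp(a \<omega>(b |\<alpha>|^(1/2))) for
  suitable a, b comparable to 1/\<lambda>, 1/h. Every norm of either family is thus dominated
  by a norm of the other, which identifies the spaces together with their inductive
  resp. projective limit topologies.
\<close>

section \<open>Equivalent systems of norms\<close>

lemma less_infinity_if_le_ereal_mult:
  fixes x y :: ereal
  assumes "x \<le> ereal C * y" and "0 \<le> C" and "y < \<infinity>"
  shows "x < \<infinity>"
  using assms by (cases y) (auto split: if_splits)

lemma ereal_mult_less_if_less_divide:
  "0 < C \<Longrightarrow> x < ereal (e / C) \<Longrightarrow> ereal C * x < ereal e"
  by (cases x) (auto simp: field_simps)

definition steps_embedded :: "(nat \<Rightarrow> 'd mseq \<Rightarrow> ereal) \<Rightarrow> (nat \<Rightarrow> 'd mseq \<Rightarrow> ereal) \<Rightarrow> bool" where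
  "steps_embedded N N' \<longleftrightarrow> (\<forall>j\<ge>1. \<exists>k\<ge>1. \<exists>C>0. \<forall>c. N' k c \<le> ereal C * N j c)"

definition seminorms_dominated :: "(nat \<Rightarrow> 'd mseq \<Rightarrow> ereal) \<Rightarrow> (nat \<Rightarrow> 'd mseq \<Rightarrow> ereal) \<Rightarrow> bool" where
  "seminorms_dominated N N' \<longleftrightarrow> (\<forall>j\<ge>1. \<exists>k\<ge>1. \<exists>C>0. \<forall>c. N j c \<le> ereal C * N' k c)"

lemma LB_set_mono:
  assumes "steps_embedded N N'"
  shows "LB_set N \<subseteq> LB_set N'"
proof
  fix c assume "c \<in> LB_set N"
  then obtain j where "1 \<le> j" "N j c < \<infinity>"
    by (auto simp: LB_set_def)
  with assms obtain k C where "1 \<le> k" "0 < C" "N' k c \<le> ereal C * N j c"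
    unfolding steps_embedded_def by blast
  then show "c \<in> LB_set N'"
    using less_infinity_if_le_ereal_mult \<open>N j c < \<infinity>\<close> unfolding LB_set_def by fastforce
qed

lemma absorbed_balls_transfer:
  assumes "steps_embedded N' N" and "\<forall>j\<ge>1. \<exists>\<epsilon>>0. {c. N j c < ereal \<epsilon>} \<subseteq> U"
  shows "\<forall>k\<ge>1. \<exists>\<epsilon>>0. {c. N' k c < ereal \<epsilon>} \<subseteq> U"
proof (intro allI impI)
  fix k :: nat assume "1 \<le> k"
  with assms(1) obtain j C where "1 \<le> j" "0 < C" and le: "\<And>c. N j c \<le> ereal C * N' k c"
    unfolding steps_embedded_def by blast
  with assms(2) obtain \<epsilon> where "0 < \<epsilon>" and ball: "{c. N j c < ereal \<epsilon>} \<subseteq> U"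
    by blast
  have "{c. N' k c < ereal (\<epsilon> / C)} \<subseteq> U"
  proof
    fix c assume "c \<in> {c. N' k c < ereal (\<epsilon> / C)}"
    then have "ereal C * N' k c < ereal \<epsilon>"
      using ereal_mult_less_if_less_divide \<open>0 < C\<close> by blast
    then show "c \<in> U"
      using le[of c] ball by auto
  qed
  then show "\<exists>\<epsilon>>0. {c. N' k c < ereal \<epsilon>} \<subseteq> U"
    using \<open>0 < \<epsilon>\<close> \<open>0 < C\<close> by (intro exI[of _ "\<epsilon> / C"]) auto
qed

lemma LB_open_transfer:
  assumes "steps_embedded N N'" and "steps_embedded N' N" and "LB_open N A"
  shows "LB_open N' A"
proof -
  have sets: "LB_set N = LB_set N'"
    using LB_set_mono assms(1,2) by blast
  show ?thesis
    unfolding LB_open_def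
  proof (intro conjI ballI)
    show "A \<subseteq> LB_set N'"
      using assms(3) sets by (simp add: LB_open_def)
    fix x assume "x \<in> A"
    with assms(3) obtain U where "abs_convex U" "U \<subseteq> LB_set N"
      and "\<forall>j\<ge>1. \<exists>\<epsilon>>0. {c. N j c < ereal \<epsilon>} \<subseteq> U" and "(\<lambda>u \<alpha>. x \<alpha> + u \<alpha>) ` U \<subseteq> A"
      unfolding LB_open_def by blast
    then show "\<exists>U. abs_convex U \<and> U \<subseteq> LB_set N' \<and>
        (\<forall>j\<ge>1. \<exists>\<epsilon>>0. {c. N' j c < ereal \<epsilon>} \<subseteq> U) \<and> (\<lambda>u \<alpha>. x \<alpha> + u \<alpha>) ` U \<subseteq> A"
      using absorbed_balls_transfer[OF assms(2)] sets by (intro exI[of _ U]) simp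
  qed
qed

lemma LB_open_eq:
  assumes "steps_embedded N N'" and "steps_embedded N' N"
  shows "LB_open N = LB_open N'"
  using LB_open_transfer[OF assms] LB_open_transfer[OF assms(2,1)] by blast

lemma PL_set_antimono:
  assumes "seminorms_dominated N N'"
  shows "PL_set N' \<subseteq> PL_set N"
proof
  fix c assume c: "c \<in> PL_set N'"
  show "c \<in> PL_set N"
    unfolding PL_set_def
  proof (intro CollectI allI impI)
    fix j :: nat assume "1 \<le> j"
    with assms obtain k C where "1 \<le> k" "0 < C" "N j c \<le> ereal C * N' k c"
      unfolding seminorms_dominated_def by blast
    with c show "N j c < \<infinity>"
      using less_infinity_if_le_ereal_mult unfolding PL_set_def by fastforce
  qed
qed

lemma seminorms_dominated_ball:
  assumes "seminorms_dominated N N'" and "0 < \<epsilon>"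
  shows "\<exists>n'\<ge>1. \<exists>\<epsilon>'>0. \<forall>c. (\<forall>j\<in>{1..n'}. N' j c < ereal \<epsilon>') \<longrightarrow> (\<forall>j\<in>{1..n}. N j c < ereal \<epsilon>)"
proof (induction n)
  case 0
  show ?case
    by (intro exI[of _ 1] conjI exI[of _ 1]) auto
next
  case (Suc n)
  then obtain n' \<epsilon>' where "1 \<le> n'" "0 < \<epsilon>'"
    and IH: "\<And>c. \<forall>j\<in>{1..n'}. N' j c < ereal \<epsilon>' \<Longrightarrow> \<forall>j\<in>{1..n}. N j c < ereal \<epsilon>"
    by blast
  have "1 \<le> Suc n"
    by simp
  with assms(1) obtain k C where "1 \<le> k" "0 < C" and le: "\<And>c. N (Suc n) c \<le> ereal C * N' k c"
    unfolding seminorms_dominated_def by blast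
  have "\<forall>j\<in>{1..Suc n}. N j c < ereal \<epsilon>"
    if small: "\<forall>j\<in>{1..max n' k}. N' j c < ereal (min \<epsilon>' (\<epsilon> / C))" for c
  proof -
    have "N' j c < ereal \<epsilon>'" if "j \<in> {1..n'}" for j
      using small that by (fastforce intro: less_le_trans)
    then have "\<forall>j\<in>{1..n}. N j c < ereal \<epsilon>"
      by (intro IH) blast
    moreover have "N' k c < ereal (\<epsilon> / C)"
      using small \<open>1 \<le> k\<close> by (fastforce intro: less_le_trans)
    then have "N (Suc n) c < ereal \<epsilon>"
      using le[of c] ereal_mult_less_if_less_divide[OF \<open>0 < C\<close>] by (blast intro: le_less_trans)
    ultimately show ?thesis
      by (auto simp: le_Suc_eq)
  qed
  then show ?case
    using \<open>1 \<le> n'\<close> \<open>0 < \<epsilon>'\<close> \<open>0 < C\<close> \<open>0 < \<epsilon>\<close>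
    by (intro exI[of _ "max n' k"] conjI exI[of _ "min \<epsilon>' (\<epsilon> / C)"]) auto
qed

lemma PL_open_transfer:
  assumes "seminorms_dominated N N'" and "seminorms_dominated N' N" and "PL_open N A"
  shows "PL_open N' A"
proof -
  have sets: "PL_set N = PL_set N'"
    using PL_set_antimono assms(1,2) by blast
  show ?thesis
    unfolding PL_open_def
  proof (intro conjI ballI)
    show "A \<subseteq> PL_set N'"
      using assms(3) sets by (simp add: PL_open_def)
    fix x assume "x \<in> A"
    with assms(3) obtain n \<epsilon> where "0 < \<epsilon>"
      and nbhd: "{y \<in> PL_set N. \<forall>j\<in>{1..n}. N j (\<lambda>\<alpha>. y \<alpha> - x \<alpha>) < ereal \<epsilon>} \<subseteq> A"
      unfolding PL_open_def by blast
    from seminorms_dominated_ball[OF assms(1) \<open>0 < \<epsilon>\<close>, of n] obtain n' \<epsilon>' where "1 \<le> n'" "0 < \<epsilon>'"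
      and ball: "\<forall>c. (\<forall>j\<in>{1..n'}. N' j c < ereal \<epsilon>') \<longrightarrow> (\<forall>j\<in>{1..n}. N j c < ereal \<epsilon>)"
      by blast
    show "\<exists>n\<ge>1. \<exists>\<epsilon>>0. {y \<in> PL_set N'. \<forall>j\<in>{1..n}. N' j (\<lambda>\<alpha>. y \<alpha> - x \<alpha>) < ereal \<epsilon>} \<subseteq> A"
    proof (intro exI[of _ n'] exI[of _ \<epsilon>'] conjI subsetI)
      fix y assume "y \<in> {y \<in> PL_set N'. \<forall>j\<in>{1..n'}. N' j (\<lambda>\<alpha>. y \<alpha> - x \<alpha>) < ereal \<epsilon>'}"
      with ball sets nbhd show "y \<in> A"
        by blast
    qed fact+
  qed
qed

lemma PL_open_eq:
  assumes "seminorms_dominated N N'" and "seminorms_dominated N' N"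
  shows "PL_open N = PL_open N'"
  using PL_open_transfer[OF assms] PL_open_transfer[OF assms(2,1)] by blast

lemma SUP_le_ereal_mult_SUP:
  fixes f g :: "'a \<Rightarrow> ereal"
  assumes "\<And>a. f a \<le> ereal K * g a" and "0 \<le> K"
  shows "(SUP a. f a) \<le> ereal K * (SUP a. g a)"
proof (rule SUP_least)
  fix a
  have "ereal K * g a \<le> ereal K * (SUP a. g a)"
    by (intro ereal_mult_left_mono SUP_upper) (use assms in auto)
  with assms(1) show "f a \<le> ereal K * (SUP a. g a)"
    by (rule order_trans)
qed

lemma eexp_mono: "x \<le> y \<Longrightarrow> eexp x \<le> eexp y"
  using eexp.simps(2,3) by (cases x; cases y) auto

lemma abs_le_vnorm: "\<bar>t j\<bar> \<le> vnorm t"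
proof -
  have "(t j)\<^sup>2 \<le> (\<Sum>i\<in>UNIV. (t i)\<^sup>2)"
    by (rule member_le_sum) auto
  then show ?thesis
    unfolding vnorm_def by (metis real_sqrt_abs real_sqrt_le_mono)
qed

lemma mlen_nonneg: "0 \<le> mlen \<alpha>"
  unfolding mlen_def by (simp add: sum_nonneg)

lemma vnorm_msqrt_div: "0 \<le> h \<Longrightarrow> vnorm (msqrt_div \<alpha> h) = sqrt (mlen \<alpha>) / h"
  unfolding vnorm_def mlen_def msqrt_div_def
  by (simp add: power_divide sum_divide_distrib[symmetric] real_sqrt_divide)

lemma sqrt_mlen_le:
  fixes \<alpha> :: "'d::finite \<Rightarrow> nat"
  assumes "\<And>i. \<alpha> i \<le> \<alpha> i0"
  shows "sqrt (mlen \<alpha>) \<le> real CARD('d) * sqrt (real (\<alpha> i0))"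
proof -
  have "mlen \<alpha> \<le> real CARD('d) * real (\<alpha> i0)"
    unfolding mlen_def using sum_mono[of UNIV "\<lambda>i. real (\<alpha> i)" "\<lambda>_. real (\<alpha> i0)"] assms
    by simp
  also have "\<dots> \<le> (real CARD('d))\<^sup>2 * real (\<alpha> i0)"
    by (intro mult_right_mono) (auto simp: power2_eq_square)
  finally show ?thesis
    by (metis abs_of_nat real_sqrt_abs real_sqrt_le_mono real_sqrt_mult)
qed

lemma le_card_mult: "0 \<le> x \<Longrightarrow> x \<le> real CARD('d::finite) * x"
  using mult_right_mono[of 1 "real CARD('d)" x] by simp

definition weighted_norm :: "(real \<Rightarrow> real) \<Rightarrow> real \<Rightarrow> real \<Rightarrow> 'd::finite mseq \<Rightarrow> ereal" where
  "weighted_norm \<omega> a b c = (SUP \<alpha>. ereal (cmod (c \<alpha>) * exp (a * \<omega> (b * sqrt (mlen \<alpha>)))))"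

lemma norm_R_eq_weighted_norm: "norm_R \<omega> j = weighted_norm \<omega> (1 / real j) (1 / real j)"
  by (simp add: fun_eq_iff norm_R_def weighted_norm_def vnorm_msqrt_div)

lemma norm_B_eq_weighted_norm: "norm_B \<omega> j = weighted_norm \<omega> (real j) (real j)"
  by (simp add: fun_eq_iff norm_B_def weighted_norm_def vnorm_msqrt_div mult.commute)

lemma ln_term_le_omegaM:
  assumes "\<And>j. t j = 0 \<Longrightarrow> \<beta> j = 0"
  shows "ereal (ln ((\<Prod>j\<in>UNIV. \<bar>t j\<bar> ^ \<beta> j) / M \<beta>)) \<le> omegaM M t"
  unfolding omegaM_def by (rule SUP_upper) (use assms in auto)

lemma ln_div_Wseq:
  "0 < P \<Longrightarrow> ln (P / Wseq \<omega> lam \<beta>) = ln P - young_conj \<omega> (lam * mlen \<beta>) / lam"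
  by (simp add: Wseq_def ln_div)

lemma young_conj_le:
  assumes "\<And>x. 0 \<le> x \<Longrightarrow> x * s - \<omega> (exp x) \<le> B"
  shows "young_conj \<omega> s \<le> B"
  unfolding young_conj_def by (rule cSup_least) (use assms in auto)

section \<open>The associated function of \<open>W^(\<lambda>)\<close>\<close>

lemma mono_convex_on_supporting_line:
  fixes f :: "real \<Rightarrow> real"
  assumes conv: "convex_on {0..} f" and mono: "mono_on {0..} f" and "0 < x0"
  obtains s where "0 \<le> s" "\<And>x. 0 \<le> x \<Longrightarrow> f x0 + s * (x - x0) \<le> f x"
proof
  let ?s = "Inf ((\<lambda>t. (f x0 - f t) / (x0 - t)) ` ({x0<..} \<inter> {0..}))"
  show "f x0 + ?s * (x - x0) \<le> f x" if "0 \<le> x" for x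
    using convex_le_Inf_differential[OF conv, of x0 x] \<open>0 < x0\<close> that by simp
  have "0 \<le> (f x0 - f t) / (x0 - t)" if "x0 < t" for t
    using mono_onD[OF mono, of x0 t] that \<open>0 < x0\<close> by (intro divide_nonpos_neg) auto
  moreover have "x0 + 1 \<in> {x0<..} \<inter> {0..}"
    using \<open>0 < x0\<close> by simp
  ultimately show "0 \<le> ?s"
    by (intro cINF_greatest) (blast, simp)
qed

context
  fixes \<omega> :: "real \<Rightarrow> real"
  assumes weight: "weight_function \<omega>"
begin

lemma weight_nonneg: "0 \<le> t \<Longrightarrow> 0 \<le> \<omega> t"
  using weight by (simp add: weight_function_def)

lemma weight_mono: "0 \<le> x \<Longrightarrow> x \<le> y \<Longrightarrow> \<omega> x \<le> \<omega> y"
  using weight unfolding weight_function_def by (meson atLeast_iff mono_onD order_trans)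

lemma ln_le_weight:
  assumes "0 < e"
  obtains C where "\<And>m. 0 \<le> m \<Longrightarrow> ln (1 + m) \<le> e * \<omega> m + C"
proof -
  have "(\<lambda>t. ln t) \<in> o[at_top](\<omega>)"
    using weight by (simp add: weight_function_def)
  from landau_o.smallD[OF this \<open>0 < e\<close>] obtain T where T: "\<And>t. T \<le> t \<Longrightarrow> \<bar>ln t\<bar> \<le> e * \<bar>\<omega> t\<bar>"
    by (auto simp: eventually_at_top_linorder)
  define T' where "T' = max T 1"
  have "ln (1 + m) \<le> e * \<omega> m + (T' + 1)" if "0 \<le> m" for m
  proof (cases "T' \<le> m")
    case True
    then have "1 \<le> m" "T \<le> m"
      by (auto simp: T'_def)
    have "ln (1 + m) \<le> ln (2 * m)"
      using \<open>1 \<le> m\<close> by simp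
    also have "\<dots> = ln 2 + ln m"
      using \<open>1 \<le> m\<close> by (simp add: ln_mult)
    also have "\<dots> \<le> 1 + e * \<omega> m"
      using T[OF \<open>T \<le> m\<close>] weight_nonneg[OF that] ln_2_less_1 by simp
    finally show ?thesis
      by (simp add: T'_def)
  next
    case False
    have "ln (1 + m) \<le> ln (1 + T')"
      using False that by simp
    also have "\<dots> \<le> T'"
      by (rule ln_add_one_self_le_self) (simp add: T'_def)
    finally show ?thesis
      using \<open>0 < e\<close> weight_nonneg[OF that] by (simp add: add_increasing)
  qed
  then show thesis
    by (rule that)
qed

lemma young_conj_ge:
  assumes "0 \<le> s" and "0 \<le> x"
  shows "x * s - \<omega> (exp x) \<le> young_conj \<omega> s"
proof -
  obtain C where C: "\<And>m. 0 \<le> m \<Longrightarrow> ln (1 + m) \<le> \<omega> m / (s + 1) + C"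
    using ln_le_weight[of "1 / (s + 1)"] \<open>0 \<le> s\<close> by auto
  have "y * s - \<omega> (exp y) \<le> C * (s + 1)" if "0 \<le> y" for y
  proof -
    have "y \<le> ln (1 + exp y)"
      by (subst ln_ge_iff) (simp_all add: add_pos_pos)
    also have "\<dots> \<le> \<omega> (exp y) / (s + 1) + C"
      by (rule C) simp
    finally have "y * (s + 1) \<le> \<omega> (exp y) + C * (s + 1)"
      using \<open>0 \<le> s\<close> by (simp add: field_simps)
    then show ?thesis
      using that by (simp add: algebra_simps)
  qed
  then have "bdd_above {t * s - \<omega> (exp t) | t. 0 \<le> t}"
    by (auto simp: bdd_above_def)
  then show ?thesis
    unfolding young_conj_def using assms by (intro cSup_upper) auto
qed

lemma young_conj_zero: "young_conj \<omega> 0 = - \<omega> 1"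
proof (rule antisym)
  show "young_conj \<omega> 0 \<le> - \<omega> 1"
    by (rule young_conj_le) (simp add: weight_mono)
  show "- \<omega> 1 \<le> young_conj \<omega> 0"
    using young_conj_ge[of 0 0] by simp
qed

lemma omegaM_Wseq_le:
  fixes t :: "'d::finite \<Rightarrow> real"
  assumes "0 < lam"
  shows "omegaM (Wseq \<omega> lam) t \<le> ereal (\<omega> (max (vnorm t) 1) / lam)"
  unfolding omegaM_def
proof (rule SUP_least)
  fix \<beta> :: "'d \<Rightarrow> nat" assume "\<beta> \<in> {\<beta>. \<forall>j. t j = 0 \<longrightarrow> \<beta> j = 0}"
  define R where "R = max (vnorm t) 1"
  define P where "P = (\<Prod>j\<in>UNIV. \<bar>t j\<bar> ^ \<beta> j)"
  have "1 \<le> R"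
    by (simp add: R_def)
  have "0 < P"
    unfolding P_def using \<open>\<beta> \<in> _\<close> by (intro prod_pos) (cases "t j = 0"; simp)
  have "P \<le> (\<Prod>j\<in>UNIV. R ^ \<beta> j)"
    unfolding P_def by (intro prod_mono conjI power_mono) (auto simp: R_def abs_le_vnorm max.coboundedI1)
  also have "\<dots> = R ^ (\<Sum>j\<in>UNIV. \<beta> j)"
    by (simp add: power_sum)
  finally have "ln P \<le> ln (R ^ (\<Sum>j\<in>UNIV. \<beta> j))"
    using \<open>0 < P\<close> by simp
  then have "ln P \<le> mlen \<beta> * ln R"
    using \<open>1 \<le> R\<close> by (simp add: mlen_def ln_realpow)
  then have "lam * ln P \<le> ln R * (lam * mlen \<beta>)"
    using \<open>0 < lam\<close> by (simp add: ac_simps)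
  also have "\<dots> \<le> \<omega> R + young_conj \<omega> (lam * mlen \<beta>)"
    using young_conj_ge[of "lam * mlen \<beta>" "ln R"] \<open>0 < lam\<close> \<open>1 \<le> R\<close> mlen_nonneg[of \<beta>] by simp
  finally have "(lam * ln P - young_conj \<omega> (lam * mlen \<beta>)) / lam \<le> \<omega> R / lam"
    using \<open>0 < lam\<close> by (intro divide_right_mono) auto
  then have "ln (P / Wseq \<omega> lam \<beta>) \<le> \<omega> R / lam"
    using \<open>0 < lam\<close> by (simp add: ln_div_Wseq[OF \<open>0 < P\<close>] diff_divide_distrib)
  then show "ereal (ln ((\<Prod>j\<in>UNIV. \<bar>t j\<bar> ^ \<beta> j) / Wseq \<omega> lam \<beta>)) \<le> ereal (\<omega> R / lam)"
    by (simp add: P_def)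
qed

lemma omegaM_Wseq_ge_weight_one:
  fixes t :: "'d::finite \<Rightarrow> real"
  assumes "0 < lam"
  shows "ereal (\<omega> 1 / lam) \<le> omegaM (Wseq \<omega> lam) t"
proof -
  have "ln ((\<Prod>j\<in>UNIV. \<bar>t j\<bar> ^ 0) / Wseq \<omega> lam (\<lambda>_::'d. 0)) = \<omega> 1 / lam"
    by (simp add: ln_div_Wseq mlen_def young_conj_zero)
  then show ?thesis
    using ln_term_le_omegaM[of t "\<lambda>_. 0" "Wseq \<omega> lam"] by simp
qed

lemma omegaM_Wseq_ge_coordinate:
  fixes t :: "'d::finite \<Rightarrow> real"
  assumes "0 < lam" and "1 < \<bar>t i\<bar>"
  shows "ereal (\<omega> \<bar>t i\<bar> / lam - ln \<bar>t i\<bar>) \<le> omegaM (Wseq \<omega> lam) t"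
proof -
  define m where "m = \<bar>t i\<bar>"
  define x0 where "x0 = ln m"
  have "0 < x0" "exp x0 = m"
    using assms(2) by (simp_all add: x0_def m_def)
  have "convex_on {0..} (\<lambda>x. \<omega> (exp x))"
    using weight by (simp add: weight_function_def)
  moreover have "mono_on {0..} (\<lambda>x. \<omega> (exp x))"
    by (intro mono_onI weight_mono) auto
  ultimately obtain s where "0 \<le> s" and supporting: "\<And>x. 0 \<le> x \<Longrightarrow> \<omega> m + s * (x - x0) \<le> \<omega> (exp x)"
    using mono_convex_on_supporting_line \<open>0 < x0\<close> \<open>exp x0 = m\<close> by metis
  \<comment> \<open>\<open>\<lambda> k\<close> approximates the supporting slope \<open>s\<close> from below, which makes Young's inequality
    at \<open>x0\<close> sharp up to the error \<open>x0\<close>.\<close>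
  define k where "k = nat \<lfloor>s / lam\<rfloor>"
  have "real k = of_int \<lfloor>s / lam\<rfloor>"
    using \<open>0 \<le> s\<close> \<open>0 < lam\<close> by (simp add: k_def)
  then have "real k \<le> s / lam" "s / lam - 1 \<le> real k"
    by linarith+
  then have "lam * real k \<le> s"
    using \<open>0 < lam\<close> by (simp add: field_simps)
  have young: "young_conj \<omega> (lam * real k) \<le> x0 * s - \<omega> m"
  proof (rule young_conj_le)
    fix x :: real assume "0 \<le> x"
    have "x * (lam * real k) \<le> x * s"
      using \<open>lam * real k \<le> s\<close> \<open>0 \<le> x\<close> by (rule mult_left_mono)
    then show "x * (lam * real k) - \<omega> (exp x) \<le> x0 * s - \<omega> m"
      using supporting[OF \<open>0 \<le> x\<close>] by (simp add: algebra_simps)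
  qed
  define \<beta> where "\<beta> = (\<lambda>j. if j = i then k else 0)"
  have "(\<Prod>j\<in>UNIV. \<bar>t j\<bar> ^ \<beta> j) = (\<Prod>j\<in>UNIV. if j = i then m ^ k else 1)"
    by (intro prod.cong) (auto simp: \<beta>_def m_def)
  then have monomial: "(\<Prod>j\<in>UNIV. \<bar>t j\<bar> ^ \<beta> j) = m ^ k"
    by simp
  have "mlen \<beta> = real k"
    by (simp add: mlen_def \<beta>_def of_nat_sum[symmetric])
  have "\<omega> m / lam - x0 = (s / lam - 1) * x0 - (x0 * s - \<omega> m) / lam"
    using \<open>0 < lam\<close> by (simp add: field_simps)
  also have "\<dots> \<le> real k * x0 - young_conj \<omega> (lam * real k) / lam"
    using \<open>s / lam - 1 \<le> real k\<close> \<open>0 < x0\<close> young \<open>0 < lam\<close>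
    by (intro diff_mono mult_right_mono divide_right_mono) auto
  also have "\<dots> = ln ((\<Prod>j\<in>UNIV. \<bar>t j\<bar> ^ \<beta> j) / Wseq \<omega> lam \<beta>)"
    using assms(2) \<open>mlen \<beta> = real k\<close> by (simp add: monomial ln_div_Wseq ln_realpow x0_def m_def)
  finally have "ereal (\<omega> m / lam - ln m) \<le> ereal (ln ((\<Prod>j\<in>UNIV. \<bar>t j\<bar> ^ \<beta> j) / Wseq \<omega> lam \<beta>))"
    by (simp add: x0_def)
  also have "\<dots> \<le> omegaM (Wseq \<omega> lam) t"
    by (rule ln_term_le_omegaM) (use assms(2) in \<open>auto simp: \<beta>_def\<close>)
  finally show ?thesis
    by (simp add: m_def)
qed

lemma omegaM_Wseq_ge:
  fixes t :: "'d::finite \<Rightarrow> real"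
  assumes "0 < lam"
  shows "ereal (\<omega> \<bar>t i\<bar> / lam - ln (1 + \<bar>t i\<bar>)) \<le> omegaM (Wseq \<omega> lam) t"
proof (cases "1 < \<bar>t i\<bar>")
  case True
  then have "ereal (\<omega> \<bar>t i\<bar> / lam - ln (1 + \<bar>t i\<bar>)) \<le> ereal (\<omega> \<bar>t i\<bar> / lam - ln \<bar>t i\<bar>)"
    by simp
  also have "\<dots> \<le> omegaM (Wseq \<omega> lam) t"
    using assms True by (rule omegaM_Wseq_ge_coordinate)
  finally show ?thesis .
next
  case False
  then have "\<omega> \<bar>t i\<bar> \<le> \<omega> 1"
    by (intro weight_mono) auto
  then have "\<omega> \<bar>t i\<bar> / lam \<le> \<omega> 1 / lam"
    using assms by (simp add: divide_right_mono)
  moreover have "0 \<le> ln (1 + \<bar>t i\<bar>)"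
    by simp
  ultimately have "ereal (\<omega> \<bar>t i\<bar> / lam - ln (1 + \<bar>t i\<bar>)) \<le> ereal (\<omega> 1 / lam)"
    unfolding ereal_less_eq(3) by linarith
  also have "\<dots> \<le> omegaM (Wseq \<omega> lam) t"
    using assms by (rule omegaM_Wseq_ge_weight_one)
  finally show ?thesis .
qed

lemma eexp_omegaM_Wseq_le:
  fixes \<alpha> :: "'d::finite \<Rightarrow> nat"
  assumes "0 < lam" "0 < h" "1 / lam \<le> a" "1 / h \<le> b"
  shows "eexp (omegaM (Wseq \<omega> lam) (msqrt_div \<alpha> h))
    \<le> ereal (exp (\<omega> 1 / lam) * exp (a * \<omega> (b * sqrt (mlen \<alpha>))))"
proof -
  define s where "s = sqrt (mlen \<alpha>)"
  have "0 \<le> s"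
    by (simp add: s_def mlen_nonneg)
  have "0 < b"
    using assms(2,4) by (meson divide_pos_pos order_less_le_trans zero_less_one)
  have "s / h \<le> b * s"
    using mult_right_mono[OF \<open>1 / h \<le> b\<close> \<open>0 \<le> s\<close>] by simp
  then have "\<omega> (max (s / h) 1) \<le> \<omega> 1 + \<omega> (b * s)"
    using weight_nonneg weight_mono \<open>0 < b\<close> \<open>0 \<le> s\<close> \<open>0 < h\<close>
    by (cases "s / h \<le> 1") (auto simp: add_increasing add_increasing2)
  moreover have "\<omega> (b * s) / lam \<le> a * \<omega> (b * s)"
    using mult_right_mono[OF \<open>1 / lam \<le> a\<close> weight_nonneg[of "b * s"]] \<open>0 < b\<close> \<open>0 \<le> s\<close>
    by simp
  ultimately have "\<omega> (max (s / h) 1) / lam \<le> \<omega> 1 / lam + a * \<omega> (b * s)"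
    using \<open>0 < lam\<close> by (smt (verit, best) add_divide_distrib divide_right_mono)
  then have "omegaM (Wseq \<omega> lam) (msqrt_div \<alpha> h) \<le> ereal (\<omega> 1 / lam + a * \<omega> (b * s))"
    using omegaM_Wseq_le[OF \<open>0 < lam\<close>, of "msqrt_div \<alpha> h"] \<open>0 < h\<close>
    by (simp add: vnorm_msqrt_div s_def) (meson ereal_less_eq(3) order_trans)
  then show ?thesis
    using eexp_mono by (fastforce simp: exp_add s_def)
qed

lemma omegaM_Wseq_msqrt_div_ge:
  fixes \<alpha> :: "'d::finite \<Rightarrow> nat"
  assumes "0 < lam" "0 < h" and C: "\<And>m. 0 \<le> m \<Longrightarrow> ln (1 + m) \<le> 1 / (2 * lam) * \<omega> m + C"
    and "0 \<le> a" "a \<le> 1 / (2 * lam)" "0 \<le> b" "b \<le> 1 / (real CARD('d) * h)"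
  shows "ereal (a * \<omega> (b * sqrt (mlen \<alpha>)) - C) \<le> omegaM (Wseq \<omega> lam) (msqrt_div \<alpha> h)"
proof -
  have "Max (range \<alpha>) \<in> range \<alpha>"
    by (rule Max_in) auto
  then obtain i where "\<alpha> i = Max (range \<alpha>)"
    by (metis rangeE)
  then have largest: "\<And>j. \<alpha> j \<le> \<alpha> i"
    by simp
  define m where "m = sqrt (real (\<alpha> i)) / h"
  have "0 \<le> m" "\<bar>msqrt_div \<alpha> h i\<bar> = m"
    using \<open>0 < h\<close> by (simp_all add: m_def msqrt_div_def)
  have "b * sqrt (mlen \<alpha>) \<le> 1 / (real CARD('d) * h) * (real CARD('d) * sqrt (real (\<alpha> i)))"
    using assms(5-7) sqrt_mlen_le[of \<alpha> i, OF largest] \<open>0 < h\<close> by (intro mult_mono) (auto simp: mlen_nonneg)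
  also have "\<dots> = m"
    by (simp add: m_def)
  finally have "\<omega> (b * sqrt (mlen \<alpha>)) \<le> \<omega> m"
    using \<open>0 \<le> b\<close> mlen_nonneg[of \<alpha>] by (intro weight_mono) auto
  then have "a * \<omega> (b * sqrt (mlen \<alpha>)) \<le> 1 / (2 * lam) * \<omega> m"
    using assms(4-6) \<open>0 < lam\<close> mlen_nonneg[of \<alpha>] by (intro mult_mono weight_nonneg) auto
  also have "\<dots> \<le> \<omega> m / lam - ln (1 + m) + C"
    using C[OF \<open>0 \<le> m\<close>] by (simp add: field_simps)
  finally have "ereal (a * \<omega> (b * sqrt (mlen \<alpha>)) - C) \<le> ereal (\<omega> m / lam - ln (1 + m))"
    by simp
  also have "\<dots> \<le> omegaM (Wseq \<omega> lam) (msqrt_div \<alpha> h)"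
    using omegaM_Wseq_ge[OF \<open>0 < lam\<close>, of "msqrt_div \<alpha> h" i] \<open>\<bar>msqrt_div \<alpha> h i\<bar> = m\<close> by simp
  finally show ?thesis .
qed

lemma eexp_omegaM_Wseq_ge:
  assumes "0 < lam" "0 < h"
  obtains K where "0 < K"
    "\<And>a b (\<alpha> :: 'd::finite \<Rightarrow> nat). 0 \<le> a \<Longrightarrow> a \<le> 1 / (2 * lam) \<Longrightarrow> 0 \<le> b \<Longrightarrow> b \<le> 1 / (real CARD('d) * h) \<Longrightarrow>
       ereal (exp (a * \<omega> (b * sqrt (mlen \<alpha>)))) \<le> ereal K * eexp (omegaM (Wseq \<omega> lam) (msqrt_div \<alpha> h))"
proof -
  \<comment> \<open>Since \<open>ln = o(\<omega>)\<close>, half of \<open>\<omega>(m)/\<lambda>\<close> absorbs the loss \<open>ln (1 + m)\<close> up to a constant.\<close>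
  obtain C where C: "\<And>m. 0 \<le> m \<Longrightarrow> ln (1 + m) \<le> 1 / (2 * lam) * \<omega> m + C"
    using ln_le_weight[of "1 / (2 * lam)"] \<open>0 < lam\<close> by auto
  have "ereal (exp (a * \<omega> (b * sqrt (mlen \<alpha>)))) \<le> ereal (exp C) * eexp (omegaM (Wseq \<omega> lam) (msqrt_div \<alpha> h))"
    if "0 \<le> a" "a \<le> 1 / (2 * lam)" "0 \<le> b" "b \<le> 1 / (real CARD('d) * h)" for a b and \<alpha> :: "'d \<Rightarrow> nat"
  proof -
    have "ereal (exp (a * \<omega> (b * sqrt (mlen \<alpha>)) - C)) \<le> eexp (omegaM (Wseq \<omega> lam) (msqrt_div \<alpha> h))"
      using eexp_mono[OF omegaM_Wseq_msqrt_div_ge[OF assms C that]] by simp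
    then have "ereal (exp C) * ereal (exp (a * \<omega> (b * sqrt (mlen \<alpha>)) - C))
        \<le> ereal (exp C) * eexp (omegaM (Wseq \<omega> lam) (msqrt_div \<alpha> h))"
      by (rule ereal_mult_left_mono) simp
    then show ?thesis
      by (simp add: exp_diff)
  qed
  then show thesis
    using that[of "exp C"] by auto
qed

section \<open>Comparison of the two systems of norms\<close>

lemma normM_Wseq_le_weighted_norm:
  assumes "0 < lam" "0 < h" "1 / lam \<le> a" "1 / h \<le> b"
  shows "normM (Wseq \<omega> lam) h c \<le> ereal (exp (\<omega> 1 / lam)) * weighted_norm \<omega> a b (c :: 'd::finite mseq)"
  unfolding normM_def weighted_norm_def
proof (rule SUP_le_ereal_mult_SUP)
  fix \<alpha> :: "'d \<Rightarrow> nat"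
  have "ereal (cmod (c \<alpha>)) * eexp (omegaM (Wseq \<omega> lam) (msqrt_div \<alpha> h))
      \<le> ereal (cmod (c \<alpha>)) * ereal (exp (\<omega> 1 / lam) * exp (a * \<omega> (b * sqrt (mlen \<alpha>))))"
    by (intro ereal_mult_left_mono eexp_omegaM_Wseq_le assms) simp
  then show "ereal (cmod (c \<alpha>)) * eexp (omegaM (Wseq \<omega> lam) (msqrt_div \<alpha> h))
      \<le> ereal (exp (\<omega> 1 / lam)) * ereal (cmod (c \<alpha>) * exp (a * \<omega> (b * sqrt (mlen \<alpha>))))"
    by (simp add: ac_simps)
qed simp

lemma weighted_norm_le_normM_Wseq:
  assumes "0 < lam" "0 < h"
  obtains K where "0 < K"
    "\<And>a b (c :: 'd::finite mseq). 0 \<le> a \<Longrightarrow> a \<le> 1 / (2 * lam) \<Longrightarrow> 0 \<le> b \<Longrightarrow> b \<le> 1 / (real CARD('d) * h) \<Longrightarrow>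
       weighted_norm \<omega> a b c \<le> ereal K * normM (Wseq \<omega> lam) h c"
proof -
  obtain K where "0 < K" and K: "\<And>a b (\<alpha> :: 'd \<Rightarrow> nat). 0 \<le> a \<Longrightarrow> a \<le> 1 / (2 * lam) \<Longrightarrow> 0 \<le> b \<Longrightarrow>
      b \<le> 1 / (real CARD('d) * h) \<Longrightarrow>
      ereal (exp (a * \<omega> (b * sqrt (mlen \<alpha>)))) \<le> ereal K * eexp (omegaM (Wseq \<omega> lam) (msqrt_div \<alpha> h))"
    using eexp_omegaM_Wseq_ge[OF assms] by blast
  have le: "weighted_norm \<omega> a b c \<le> ereal K * normM (Wseq \<omega> lam) h c"
    if "0 \<le> a" "a \<le> 1 / (2 * lam)" "0 \<le> b" "b \<le> 1 / (real CARD('d) * h)" for a b and c :: "'d mseq"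
    unfolding normM_def weighted_norm_def
  proof (rule SUP_le_ereal_mult_SUP)
    fix \<alpha> :: "'d \<Rightarrow> nat"
    have "ereal (cmod (c \<alpha>)) * ereal (exp (a * \<omega> (b * sqrt (mlen \<alpha>))))
        \<le> ereal (cmod (c \<alpha>)) * (ereal K * eexp (omegaM (Wseq \<omega> lam) (msqrt_div \<alpha> h)))"
      by (intro ereal_mult_left_mono K that) simp
    then show "ereal (cmod (c \<alpha>) * exp (a * \<omega> (b * sqrt (mlen \<alpha>))))
        \<le> ereal K * (ereal (cmod (c \<alpha>)) * eexp (omegaM (Wseq \<omega> lam) (msqrt_div \<alpha> h)))"
      by (simp add: ac_simps)
  qed (use \<open>0 < K\<close> in simp)
  from \<open>0 < K\<close> le show thesis
    by (rule that)
qed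

lemma norm_MR_le_norm_R:
  "0 < j \<Longrightarrow> norm_MR \<omega> j c \<le> ereal (exp (\<omega> 1 / real j)) * norm_R \<omega> j c"
  unfolding norm_MR_def norm_R_eq_weighted_norm by (rule normM_Wseq_le_weighted_norm) auto

lemma norm_R_le_normM_Wseq:
  assumes "0 < lam" "0 < h"
  obtains K where "0 < K"
    "\<And>k (c :: 'd::finite mseq). 2 * lam \<le> real k \<Longrightarrow> real CARD('d) * h \<le> real k \<Longrightarrow>
       norm_R \<omega> k c \<le> ereal K * normM (Wseq \<omega> lam) h c"
proof -
  obtain K where "0 < K" and K: "\<And>a b (c :: 'd mseq). 0 \<le> a \<Longrightarrow> a \<le> 1 / (2 * lam) \<Longrightarrow> 0 \<le> b \<Longrightarrow>
      b \<le> 1 / (real CARD('d) * h) \<Longrightarrow> weighted_norm \<omega> a b c \<le> ereal K * normM (Wseq \<omega> lam) h c"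
    using weighted_norm_le_normM_Wseq[OF assms] by blast
  have "norm_R \<omega> k c \<le> ereal K * normM (Wseq \<omega> lam) h c"
    if "2 * lam \<le> real k" "real CARD('d) * h \<le> real k" for k and c :: "'d mseq"
    unfolding norm_R_eq_weighted_norm using that assms by (intro K) (auto intro!: frac_le)
  with \<open>0 < K\<close> show thesis
    by (rule that)
qed

lemma normM_Wseq_le_norm_B:
  assumes "0 < lam" "0 < h" "1 / lam \<le> real j" "1 / h \<le> real j"
  shows "normM (Wseq \<omega> lam) h c \<le> ereal (exp (\<omega> 1 / lam)) * norm_B \<omega> j c"
  unfolding norm_B_eq_weighted_norm using assms by (rule normM_Wseq_le_weighted_norm)

lemma norm_B_le_norm_MB:
  assumes "1 \<le> j"
  obtains K where "0 < K" "\<And>c :: 'd::finite mseq. norm_B \<omega> j c \<le> ereal K * norm_MB \<omega> (2 * CARD('d) * j) c"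
proof -
  define k where "k = 2 * CARD('d) * j"
  have "0 < real k"
    using assms by (simp add: k_def)
  then obtain K where "0 < K" and K: "\<And>a b (c :: 'd mseq). 0 \<le> a \<Longrightarrow> a \<le> 1 / (2 * (1 / real k)) \<Longrightarrow> 0 \<le> b \<Longrightarrow>
      b \<le> 1 / (real CARD('d) * (1 / real k)) \<Longrightarrow> weighted_norm \<omega> a b c \<le> ereal K * norm_MB \<omega> k c"
    using weighted_norm_le_normM_Wseq[of "1 / real k" "1 / real k"] unfolding norm_MB_def by auto
  have "real j \<le> real CARD('d) * real j"
    by (simp add: le_card_mult)
  then have "real j \<le> 1 / (2 * (1 / real k))" "real j \<le> 1 / (real CARD('d) * (1 / real k))"
    by (simp_all add: k_def)
  then have "norm_B \<omega> j c \<le> ereal K * norm_MB \<omega> k c" for c :: "'d mseq"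
    unfolding norm_B_eq_weighted_norm by (intro K) auto
  with \<open>0 < K\<close> show thesis
    unfolding k_def by (rule that)
qed

lemma Lambda_R_eq_Lambda_MR: "Lambda_R \<omega> = (Lambda_MR \<omega> :: 'd::finite mseq set)"
proof (intro set_eqI iffI)
  fix c :: "'d mseq"
  assume "c \<in> Lambda_R \<omega>"
  then obtain j where "1 \<le> j" "norm_R \<omega> j c < \<infinity>"
    by (auto simp: Lambda_R_def)
  then have "normM (Wseq \<omega> (real j)) (real j) c < \<infinity>"
    using norm_MR_le_norm_R[of j c] unfolding norm_MR_def
    by (auto elim: less_infinity_if_le_ereal_mult)
  with \<open>1 \<le> j\<close> show "c \<in> Lambda_MR \<omega>"
    unfolding Lambda_MR_def by (intro CollectI exI[of _ "real j"] conjI) auto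
next
  fix c :: "'d mseq"
  assume "c \<in> Lambda_MR \<omega>"
  then obtain lam h where "0 < lam" "0 < h" and finite: "normM (Wseq \<omega> lam) h c < \<infinity>"
    by (auto simp: Lambda_MR_def)
  then obtain K where "0 < K" and K: "\<And>k (c :: 'd mseq). 2 * lam \<le> real k \<Longrightarrow>
      real CARD('d) * h \<le> real k \<Longrightarrow> norm_R \<omega> k c \<le> ereal K * normM (Wseq \<omega> lam) h c"
    using norm_R_le_normM_Wseq by metis
  obtain k :: nat where k: "2 * lam + real CARD('d) * h \<le> real k"
    using real_arch_simple by blast
  moreover have "0 \<le> real CARD('d) * h"
    using \<open>0 < h\<close> by simp
  ultimately have "2 * lam \<le> real k" "real CARD('d) * h \<le> real k" "0 < real k"
    using \<open>0 < lam\<close> by linarith+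
  then have "norm_R \<omega> k c < \<infinity>" "1 \<le> k"
    using less_infinity_if_le_ereal_mult[OF K _ finite] \<open>0 < K\<close> by auto
  then show "c \<in> Lambda_R \<omega>"
    by (auto simp: Lambda_R_def)
qed

lemma Lambda_B_eq_Lambda_MB: "Lambda_B \<omega> = (Lambda_MB \<omega> :: 'd::finite mseq set)"
proof (intro set_eqI iffI)
  fix c :: "'d mseq"
  assume c: "c \<in> Lambda_B \<omega>"
  show "c \<in> Lambda_MB \<omega>"
    unfolding Lambda_MB_def
  proof (intro CollectI allI impI)
    fix lam h :: real assume "0 < lam" "0 < h"
    obtain j :: nat where "1 / lam + 1 / h \<le> real j"
      using real_arch_simple by blast
    moreover have "0 < 1 / lam" "0 < 1 / h"
      using \<open>0 < lam\<close> \<open>0 < h\<close> by simp_all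
    ultimately have "1 / lam \<le> real j" "1 / h \<le> real j" "1 \<le> j"
      by linarith+
    then have "normM (Wseq \<omega> lam) h c \<le> ereal (exp (\<omega> 1 / lam)) * norm_B \<omega> j c"
      using \<open>0 < lam\<close> \<open>0 < h\<close> by (intro normM_Wseq_le_norm_B)
    moreover have "norm_B \<omega> j c < \<infinity>"
      using c \<open>1 \<le> j\<close> by (simp add: Lambda_B_def)
    ultimately show "normM (Wseq \<omega> lam) h c < \<infinity>"
      by (meson less_infinity_if_le_ereal_mult exp_ge_zero)
  qed
next
  fix c :: "'d mseq"
  assume c: "c \<in> Lambda_MB \<omega>"
  show "c \<in> Lambda_B \<omega>"
    unfolding Lambda_B_def
  proof (intro CollectI allI impI)
    fix j :: nat assume "1 \<le> j"
    then obtain K where "0 < K" and K: "\<And>c :: 'd mseq. norm_B \<omega> j c \<le> ereal K * norm_MB \<omega> (2 * CARD('d) * j) c"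
      using norm_B_le_norm_MB by blast
    have "norm_MB \<omega> (2 * CARD('d) * j) c < \<infinity>"
      using c \<open>1 \<le> j\<close> by (simp add: Lambda_MB_def norm_MB_def)
    with K \<open>0 < K\<close> show "norm_B \<omega> j c < \<infinity>"
      by (meson less_infinity_if_le_ereal_mult less_imp_le)
  qed
qed

lemma steps_embedded_norm_R_norm_MR:
  "steps_embedded (norm_R \<omega>) (norm_MR \<omega> :: nat \<Rightarrow> 'd::finite mseq \<Rightarrow> ereal)"
  unfolding steps_embedded_def
proof (intro allI impI)
  fix j :: nat assume "1 \<le> j"
  then have "norm_MR \<omega> j c \<le> ereal (exp (\<omega> 1 / real j)) * norm_R \<omega> j c" for c :: "'d mseq"
    by (intro norm_MR_le_norm_R) simp
  with \<open>1 \<le> j\<close> show "\<exists>k\<ge>1. \<exists>C>0. \<forall>c :: 'd mseq. norm_MR \<omega> k c \<le> ereal C * norm_R \<omega> j c"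
    by (intro exI[of _ j] conjI exI[of _ "exp (\<omega> 1 / real j)"] allI) auto
qed

lemma steps_embedded_norm_MR_norm_R:
  "steps_embedded (norm_MR \<omega>) (norm_R \<omega> :: nat \<Rightarrow> 'd::finite mseq \<Rightarrow> ereal)"
  unfolding steps_embedded_def
proof (intro allI impI)
  fix j :: nat assume "1 \<le> j"
  obtain K where "0 < K" and K: "\<And>k (c :: 'd mseq). 2 * real j \<le> real k \<Longrightarrow>
      real CARD('d) * real j \<le> real k \<Longrightarrow> norm_R \<omega> k c \<le> ereal K * norm_MR \<omega> j c"
    unfolding norm_MR_def by (rule norm_R_le_normM_Wseq) (use \<open>1 \<le> j\<close> in auto)
  have "2 * real j \<le> real (2 * CARD('d) * j)" "real CARD('d) * real j \<le> real (2 * CARD('d) * j)"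
    using le_card_mult[of "real j"] by simp_all
  moreover have "1 \<le> 2 * CARD('d) * j"
    using \<open>1 \<le> j\<close> by simp
  ultimately show "\<exists>k\<ge>1. \<exists>C>0. \<forall>c :: 'd mseq. norm_R \<omega> k c \<le> ereal C * norm_MR \<omega> j c"
    using K \<open>0 < K\<close> by blast
qed

lemma seminorms_dominated_norm_B_norm_MB:
  "seminorms_dominated (norm_B \<omega>) (norm_MB \<omega> :: nat \<Rightarrow> 'd::finite mseq \<Rightarrow> ereal)"
  unfolding seminorms_dominated_def
proof (intro allI impI)
  fix j :: nat assume "1 \<le> j"
  then obtain K where "0 < K" "\<And>c :: 'd mseq. norm_B \<omega> j c \<le> ereal K * norm_MB \<omega> (2 * CARD('d) * j) c"
    using norm_B_le_norm_MB by blast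
  moreover have "1 \<le> 2 * CARD('d) * j"
    using \<open>1 \<le> j\<close> by simp
  ultimately show "\<exists>k\<ge>1. \<exists>C>0. \<forall>c :: 'd mseq. norm_B \<omega> j c \<le> ereal C * norm_MB \<omega> k c"
    by blast
qed

lemma seminorms_dominated_norm_MB_norm_B:
  "seminorms_dominated (norm_MB \<omega>) (norm_B \<omega> :: nat \<Rightarrow> 'd::finite mseq \<Rightarrow> ereal)"
  unfolding seminorms_dominated_def
proof (intro allI impI)
  fix j :: nat assume "1 \<le> j"
  then have "norm_MB \<omega> j c \<le> ereal (exp (\<omega> 1 * real j)) * norm_B \<omega> j c" for c :: "'d mseq"
    unfolding norm_MB_def using normM_Wseq_le_norm_B[of "1 / real j" "1 / real j" j c] by simp
  with \<open>1 \<le> j\<close> show "\<exists>k\<ge>1. \<exists>C>0. \<forall>c :: 'd mseq. norm_MB \<omega> j c \<le> ereal C * norm_B \<omega> k c"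
    by (intro exI[of _ j] conjI exI[of _ "exp (\<omega> 1 * real j)"] allI) auto
qed

end

theorem proposition6p8:
  fixes \<omega> :: "real \<Rightarrow> real"
  assumes "weight_function \<omega>"
  shows "(Lambda_R \<omega> :: 'd::finite mseq set) = Lambda_MR \<omega>
    \<and> (LB_open (norm_R \<omega>) :: 'd mseq set \<Rightarrow> bool) = LB_open (norm_MR \<omega>)
    \<and> (Lambda_B \<omega> :: 'd mseq set) = Lambda_MB \<omega>
    \<and> (PL_open (norm_B \<omega>) :: 'd mseq set \<Rightarrow> bool) = PL_open (norm_MB \<omega>)"
  using Lambda_R_eq_Lambda_MR[OF assms] Lambda_B_eq_Lambda_MB[OF assms]
    LB_open_eq[OF steps_embedded_norm_R_norm_MR[OF assms] steps_embedded_norm_MR_norm_R[OF assms]]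
    PL_open_eq[OF seminorms_dominated_norm_B_norm_MB[OF assms] seminorms_dominated_norm_MB_norm_B[OF assms]]
  by blast

end
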